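(* Given any instance of the 1-D Crazy Frog Puzzle, one can construct in polynomial time an instance of the 1-D Crazy Frog Puzzle in which the frog is placed on the leftmost cell of the board, such that the new instance has a solution if and only if the original one does.
   Context: 1-D Crazy Frog Puzzle: a board consisting of a single row of cells indexed $0,1,\dots,w-1$, each cell empty or blocked, a starting cell on which a frog is placed (counting as visited), and a sequence of $m$ positive integer jump lengths $J_1,\dots,J_m$, where $m$ is the number of empty cells. Question: is there a choice of signs $s_i\in\{-1,+1\}$ such that the positions $p_i=p_{i-1}+s_iJ_i$ ($p_0$ the start) always lie in $\{0,\dots,w-1\}$, are never blocked cells and are never previously visited, so that every empty cell is visited exactly once? *)

theory Defs
  imports Main
begin

text \<open>An instance: the board is a list of cells (True = blocked, False = empty),
  the start cell index, and the list of jump lengths J_1 ... J_m.\<close>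

record cfp =
  board :: "bool list"
  start :: nat
  jumps :: "nat list"

definition free_cells :: "cfp \<Rightarrow> nat set" where
  "free_cells I = {i. i < length (board I) \<and> \<not> board I ! i}"

definition valid_cfp :: "cfp \<Rightarrow> bool" where
  "valid_cfp I \<longleftrightarrow> start I \<in> free_cells I \<and> (\<forall>j \<in> set (jumps I). 0 < j)
     \<and> length (jumps I) + 1 = card (free_cells I)"

definition frog_pos :: "cfp \<Rightarrow> (nat \<Rightarrow> int) \<Rightarrow> nat \<Rightarrow> int" where
  "frog_pos I s i = int (start I) + (\<Sum>k<i. s k * int (jumps I ! k))"

definition cfp_solution :: "cfp \<Rightarrow> (nat \<Rightarrow> int) \<Rightarrow> bool" where
  "cfp_solution I s \<longleftrightarrow>
     (let m = length (jumps I); w = length (board I) in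
       (\<forall>k<m. s k = -1 \<or> s k = 1)
     \<and> (\<forall>i\<le>m. 0 \<le> frog_pos I s i \<and> frog_pos I s i < int w
               \<and> \<not> board I ! nat (frog_pos I s i))
     \<and> (\<forall>i\<le>m. \<forall>j<i. frog_pos I s i \<noteq> frog_pos I s j)
     \<and> {nat (frog_pos I s i) | i. i \<le> m} = free_cells I)"

definition cfp_solvable :: "cfp \<Rightarrow> bool" where
  "cfp_solvable I \<longleftrightarrow> (\<exists>s. cfp_solution I s)"

fun bits_of :: "nat \<Rightarrow> bool list" where
  "bits_of n = (if n = 0 then [] else odd n # bits_of (n div 2))"

text \<open>Self-delimiting item encoding: bit b becomes [True, b]; an item ends with [False, False].\<close>

definition enc_item :: "bool list \<Rightarrow> bool list" where
  "enc_item bs = concat (map (\<lambda>b. [True, b]) bs) @ [False, False]"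

definition enc_cfp :: "cfp \<Rightarrow> bool list" where
  "enc_cfp I = enc_item (board I) @ enc_item (bits_of (start I))
     @ concat (map (\<lambda>j. enc_item (bits_of j)) (jumps I))"

text \<open>Tapes are two-way infinite (indexed by int); symbols are naturals below alpha,
  0 is the blank; states are naturals below nstates, 0 is the initial state and 1 the
  halting state.\<close>

record tm =
  ntapes :: nat
  alpha :: nat
  nstates :: nat
  delta :: "nat \<Rightarrow> nat list \<Rightarrow> nat \<times> nat list \<times> int list"

definition wf_tm :: "tm \<Rightarrow> bool" where
  "wf_tm M \<longleftrightarrow> 1 \<le> ntapes M \<and> 3 \<le> alpha M \<and> 2 \<le> nstates M \<and>
     (\<forall>q rs. q < nstates M \<and> q \<noteq> 1 \<and> length rs = ntapes M \<and> (\<forall>r\<in>set rs. r < alpha M) \<longrightarrow>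
        (case delta M q rs of (q', ws, ms) \<Rightarrow>
           q' < nstates M \<and> length ws = ntapes M \<and> (\<forall>a\<in>set ws. a < alpha M)
           \<and> length ms = ntapes M \<and> (\<forall>d\<in>set ms. d \<in> {-1, 0, 1})))"

type_synonym tm_conf = "nat \<times> (nat \<Rightarrow> int \<Rightarrow> nat) \<times> (nat \<Rightarrow> int)"

definition tm_step :: "tm \<Rightarrow> tm_conf \<Rightarrow> tm_conf" where
  "tm_step M c = (case c of (q, t, h) \<Rightarrow>
     if q = 1 then c else
     (case delta M q (map (\<lambda>i. t i (h i)) [0..<ntapes M]) of (q', ws, ms) \<Rightarrow>
       (q', (\<lambda>i. if i < ntapes M then (t i)(h i := ws ! i) else t i),
            (\<lambda>i. if i < ntapes M then h i + ms ! i else h i))))"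

definition tm_run :: "tm \<Rightarrow> nat \<Rightarrow> tm_conf \<Rightarrow> tm_conf" where
  "tm_run M n c = (tm_step M ^^ n) c"

definition tm_init :: "bool list \<Rightarrow> tm_conf" where
  "tm_init x = (0, (\<lambda>i p. if i = 0 \<and> 0 \<le> p \<and> p < int (length x)
                          then (if x ! nat p then 2 else 1) else 0), (\<lambda>i. 0))"

definition tm_output :: "tm \<Rightarrow> tm_conf \<Rightarrow> bool list" where
  "tm_output M c = (case c of (q, t, h) \<Rightarrow>
     map (\<lambda>j. t (ntapes M - 1) (int j) = 2)
         [0..<(LEAST j. t (ntapes M - 1) (int j) \<notin> {1, 2})])"

definition tm_computes_within :: "tm \<Rightarrow> bool list \<Rightarrow> bool list \<Rightarrow> nat \<Rightarrow> bool" where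
  "tm_computes_within M x y n \<longleftrightarrow>
     (\<exists>n'\<le>n. fst (tm_run M n' (tm_init x)) = 1 \<and> tm_output M (tm_run M n' (tm_init x)) = y)"

end

theory Submission
  imports Defs
begin

text \<open>Add a new empty cell to the left of the board, put the frog on it and prepend the jump
  p + 1, where p is the old start. A first jump to the left would leave the board, so every
  solution of the new instance first lands on the old start and then runs through a solution of
  the old instance shifted one cell to the right; conversely every old solution extends this way.
  On the binary encoding the new instance is produced in one pass by a two-tape machine: it emits
  the new empty cell, copies the board, emits the empty start 0, increments the old start bit by
  bit to obtain the new first jump, and copies the remaining jumps.\<close>

definition prepend_start_cell :: "cfp \<Rightarrow> cfp" where
  "prepend_start_cell I =
     I\<lparr>board := False # board I, start := 0, jumps := Suc (start I) # jumps I\<rparr>"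

lemma prepend_start_cell_simps [simp]:
  "start (prepend_start_cell I) = 0"
  "board (prepend_start_cell I) = False # board I"
  "jumps (prepend_start_cell I) = Suc (start I) # jumps I"
  by (simp_all add: prepend_start_cell_def)

lemma free_cells_prepend_start_cell:
  "free_cells (prepend_start_cell I) = insert 0 (Suc ` free_cells I)"
proof (rule set_eqI)
  fix n show "n \<in> free_cells (prepend_start_cell I) \<longleftrightarrow> n \<in> insert 0 (Suc ` free_cells I)"
    by (cases n) (auto simp: free_cells_def)
qed

lemma valid_cfp_prepend_start_cell:
  assumes "valid_cfp I"
  shows "valid_cfp (prepend_start_cell I)"
proof -
  have "finite (free_cells I)" by (simp add: free_cells_def)
  then have "card (free_cells (prepend_start_cell I)) = Suc (card (free_cells I))"
    by (simp add: free_cells_prepend_start_cell card_image)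
  with assms show ?thesis
    by (simp add: valid_cfp_def free_cells_def)
qed

lemma frog_pos_prepend_start_cell_0: "frog_pos (prepend_start_cell I) s 0 = 0"
  by (simp add: frog_pos_def)

lemma frog_pos_prepend_start_cell_Suc:
  assumes "s 0 = 1"
  shows "frog_pos (prepend_start_cell I) s (Suc i) = 1 + frog_pos I (\<lambda>k. s (Suc k)) i"
  unfolding frog_pos_def using assms by (subst sum.lessThan_Suc_shift) simp

lemma frog_pos_prepend_start_cell_left:
  assumes "s 0 = -1"
  shows "frog_pos (prepend_start_cell I) s 1 = - int (Suc (start I))"
  using assms by (simp add: frog_pos_def)

lemma insert_0_Suc_image_eq_iff: "insert 0 (Suc ` A) = insert 0 (Suc ` B) \<longleftrightarrow> A = B"
proof
  assume "insert 0 (Suc ` A) = insert 0 (Suc ` B)"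
  then have "Suc ` A = Suc ` B"
    by (metis Diff_insert_absorb image_iff nat.distinct(1))
  then show "A = B" by (simp add: inj_image_eq_iff)
qed simp

lemma setcompr_atMost_eq_image: "{f i | i. i \<le> (n::nat)} = f ` {..n}"
  by auto

lemma nat_1_plus: "0 \<le> (p::int) \<Longrightarrow> nat (1 + p) = Suc (nat p)"
  by simp

lemma cfp_solution_prepend_start_cell:
  assumes sol: "cfp_solution I s"
  shows "cfp_solution (prepend_start_cell I) (case_nat 1 s)"
proof -
  let ?J = "prepend_start_cell I" and ?s = "case_nat 1 s :: nat \<Rightarrow> int"
  let ?m = "length (jumps I)"
  have pos_Suc: "frog_pos ?J ?s (Suc i) = 1 + frog_pos I s i" for i
    using frog_pos_prepend_start_cell_Suc[of ?s I i] by simp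
  note pos_0 = frog_pos_prepend_start_cell_0
  from sol have signs: "\<forall>k<?m. s k = -1 \<or> s k = 1"
    and cells: "\<forall>i\<le>?m. 0 \<le> frog_pos I s i \<and> frog_pos I s i < int (length (board I))
                     \<and> \<not> board I ! nat (frog_pos I s i)"
    and fresh: "\<forall>i\<le>?m. \<forall>j<i. frog_pos I s i \<noteq> frog_pos I s j"
    and covers: "{nat (frog_pos I s i) | i. i \<le> ?m} = free_cells I"
    by (auto simp: cfp_solution_def Let_def)
  have "\<forall>k<Suc ?m. ?s k = -1 \<or> ?s k = 1"
    using signs by (auto split: nat.splits)
  moreover have "\<forall>i\<le>Suc ?m. 0 \<le> frog_pos ?J ?s i \<and> frog_pos ?J ?s i < int (Suc (length (board I)))
      \<and> \<not> board ?J ! nat (frog_pos ?J ?s i)"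
  proof (intro allI impI)
    fix i assume "i \<le> Suc ?m"
    then show "0 \<le> frog_pos ?J ?s i \<and> frog_pos ?J ?s i < int (Suc (length (board I)))
      \<and> \<not> board ?J ! nat (frog_pos ?J ?s i)"
      using cells by (cases i) (auto simp: pos_0 pos_Suc nat_1_plus)
  qed
  moreover have "\<forall>i\<le>Suc ?m. \<forall>j<i. frog_pos ?J ?s i \<noteq> frog_pos ?J ?s j"
  proof (intro allI impI)
    fix i j assume "i \<le> Suc ?m" "j < i"
    then show "frog_pos ?J ?s i \<noteq> frog_pos ?J ?s j"
      using cells fresh by (cases i; cases j) (auto simp: pos_0 pos_Suc)
  qed
  moreover have "{nat (frog_pos ?J ?s i) | i. i \<le> Suc ?m} = free_cells ?J"
  proof -
    have "{nat (frog_pos ?J ?s i) | i. i \<le> Suc ?m}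
        = insert 0 (Suc ` ((\<lambda>i. nat (frog_pos I s i)) ` {..?m}))"
      unfolding setcompr_atMost_eq_image atMost_Suc_eq_insert_0 using cells
      by (auto simp: pos_0 pos_Suc nat_1_plus image_image intro!: image_cong)
    then show ?thesis
      using covers by (simp add: free_cells_prepend_start_cell setcompr_atMost_eq_image)
  qed
  ultimately show ?thesis
    by (simp add: cfp_solution_def Let_def)
qed

lemma cfp_solution_of_prepend_start_cell:
  assumes sol: "cfp_solution (prepend_start_cell I) s"
  shows "cfp_solution I (\<lambda>k. s (Suc k))"
proof -
  let ?J = "prepend_start_cell I" and ?t = "\<lambda>k. s (Suc k)"
  let ?m = "length (jumps I)"
  from sol have signs: "\<forall>k<Suc ?m. s k = -1 \<or> s k = 1"
    and cells: "\<forall>i\<le>Suc ?m. 0 \<le> frog_pos ?J s i \<and> frog_pos ?J s i < int (Suc (length (board I)))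
      \<and> \<not> board ?J ! nat (frog_pos ?J s i)"
    and fresh: "\<forall>i\<le>Suc ?m. \<forall>j<i. frog_pos ?J s i \<noteq> frog_pos ?J s j"
    and covers: "{nat (frog_pos ?J s i) | i. i \<le> Suc ?m} = free_cells ?J"
    by (auto simp: cfp_solution_def Let_def)
  have "s 0 = 1"
  proof (rule ccontr)
    assume "s 0 \<noteq> 1"
    with signs have "s 0 = -1" by auto
    then have "frog_pos ?J s 1 < 0"
      using frog_pos_prepend_start_cell_left[of s I] by simp
    moreover have "0 \<le> frog_pos ?J s 1"
      using cells by auto
    ultimately show False by simp
  qed
  then have pos_Suc: "frog_pos ?J s (Suc i) = 1 + frog_pos I ?t i" for i
    by (rule frog_pos_prepend_start_cell_Suc)
  note pos_0 = frog_pos_prepend_start_cell_0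
  \<comment> \<open>The new cell 0 is taken by the start, so the old positions stay on the old board.\<close>
  have nonneg: "0 \<le> frog_pos I ?t i" if "i \<le> ?m" for i
  proof -
    have "frog_pos ?J s (Suc i) \<noteq> frog_pos ?J s 0" "0 \<le> frog_pos ?J s (Suc i)"
      using fresh[rule_format, of "Suc i" 0] cells[rule_format, of "Suc i"] that by simp_all
    then show ?thesis by (simp add: pos_0 pos_Suc)
  qed
  have "\<forall>k<?m. ?t k = -1 \<or> ?t k = 1"
    using signs by auto
  moreover have "\<forall>i\<le>?m. 0 \<le> frog_pos I ?t i \<and> frog_pos I ?t i < int (length (board I))
      \<and> \<not> board I ! nat (frog_pos I ?t i)"
  proof (intro allI impI)
    fix i assume "i \<le> ?m"
    then show "0 \<le> frog_pos I ?t i \<and> frog_pos I ?t i < int (length (board I))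
      \<and> \<not> board I ! nat (frog_pos I ?t i)"
      using cells[rule_format, of "Suc i"] nonneg[of i] by (simp add: pos_Suc nat_1_plus)
  qed
  moreover have "\<forall>i\<le>?m. \<forall>j<i. frog_pos I ?t i \<noteq> frog_pos I ?t j"
  proof (intro allI impI)
    fix i j assume "i \<le> ?m" "j < i"
    then have "frog_pos ?J s (Suc i) \<noteq> frog_pos ?J s (Suc j)"
      using fresh[rule_format, of "Suc i" "Suc j"] by simp
    then show "frog_pos I ?t i \<noteq> frog_pos I ?t j" by (simp add: pos_Suc)
  qed
  moreover have "{nat (frog_pos I ?t i) | i. i \<le> ?m} = free_cells I"
  proof -
    have "{nat (frog_pos ?J s i) | i. i \<le> Suc ?m}
        = insert 0 (Suc ` ((\<lambda>i. nat (frog_pos I ?t i)) ` {..?m}))"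
      unfolding setcompr_atMost_eq_image atMost_Suc_eq_insert_0 using nonneg
      by (auto simp: pos_0 pos_Suc nat_1_plus image_image intro!: image_cong)
    with covers have "insert 0 (Suc ` free_cells I)
        = insert 0 (Suc ` ((\<lambda>i. nat (frog_pos I ?t i)) ` {..?m}))"
      by (simp add: free_cells_prepend_start_cell)
    then show ?thesis
      by (simp only: insert_0_Suc_image_eq_iff setcompr_atMost_eq_image)
  qed
  ultimately show ?thesis
    by (simp add: cfp_solution_def Let_def)
qed

lemma cfp_solvable_prepend_start_cell:
  "cfp_solvable (prepend_start_cell I) \<longleftrightarrow> cfp_solvable I"
  unfolding cfp_solvable_def
  using cfp_solution_prepend_start_cell cfp_solution_of_prepend_start_cell by blast

fun bits_incr :: "bool list \<Rightarrow> bool list" where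
  "bits_incr [] = [True]"
| "bits_incr (True # bs) = False # bits_incr bs"
| "bits_incr (False # bs) = True # bs"

lemma bits_of_Suc: "bits_of (Suc n) = bits_incr (bits_of n)"
proof (induction n rule: less_induct)
  case (less n)
  show ?case
  proof (cases "n = 0")
    case False
    show ?thesis
    proof (cases "even n")
      case True
      with \<open>n \<noteq> 0\<close> show ?thesis by simp
    next
      case False
      then have "bits_of (Suc n) = False # bits_of (Suc (n div 2))"
        by simp
      also have "bits_of (Suc (n div 2)) = bits_incr (bits_of (n div 2))"
        using \<open>n \<noteq> 0\<close> by (intro less.IH) simp
      finally show ?thesis
        using False \<open>n \<noteq> 0\<close> by simp
    qed
  qed simp
qed

definition tagged :: "bool list \<Rightarrow> bool list" where
  "tagged bs = concat (map (\<lambda>b. [True, b]) bs)"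

lemma tagged_simps [simp]:
  "tagged [] = []"
  "tagged (b # bs) = True # b # tagged bs"
  by (simp_all add: tagged_def)

lemma enc_item_eq_tagged: "enc_item bs = tagged bs @ [False, False]"
  by (simp add: enc_item_def tagged_def)

definition bool_sym :: "bool \<Rightarrow> nat" where
  "bool_sym b = (if b then 2 else 1)"

definition word_tape :: "bool list \<Rightarrow> int \<Rightarrow> nat" where
  "word_tape x p = (if 0 \<le> p \<and> p < int (length x) then bool_sym (x ! nat p) else 0)"

definition read_sym :: "bool list \<Rightarrow> nat" where
  "read_sym xs = (case xs of [] \<Rightarrow> 0 | c # _ \<Rightarrow> bool_sym c)"

text \<open>The input is pre @ todo, of which pre has already been consumed; the output written
  so far is ys.\<close>

definition cfg :: "nat \<Rightarrow> bool list \<Rightarrow> bool list \<Rightarrow> bool list \<Rightarrow> tm_conf" where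
  "cfg q pre todo ys =
     (q, (\<lambda>i. if i = 0 then word_tape (pre @ todo) else if i = 1 then word_tape ys else (\<lambda>p. 0)),
         (\<lambda>i. if i = 0 then int (length pre) else if i = 1 then int (length ys) else 0))"

text \<open>States 0 and 2 write the new empty cell; 3 and 4 copy the board; 5, 6 and 7 copy its end
  marker and write the empty start; 8 and 9 increment the old start bit by bit, with 10 appending
  a new leading bit; 11 copies the rest of the input and halts at the first blank.\<close>

definition prepend_delta :: "nat \<Rightarrow> nat \<Rightarrow> nat \<times> nat list \<times> int list" where
  "prepend_delta q r =
    (if q = 0 then (2, [r, 2], [0, 1])
     else if q = 2 then (3, [r, 1], [0, 1])
     else if q = 3 then (if r = 2 then 4 else 5, [r, r], [1, 1])
     else if q = 4 then (3, [r, r], [1, 1])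
     else if q = 5 then (6, [r, r], [1, 1])
     else if q = 6 then (7, [r, 1], [0, 1])
     else if q = 7 then (8, [r, 1], [0, 1])
     else if q = 8 then (if r = 2 then (9, [r, 2], [1, 1]) else (10, [r, 2], [0, 1]))
     else if q = 9 then (if r = 2 then (8, [r, 1], [1, 1]) else (11, [r, 2], [1, 1]))
     else if q = 10 then (11, [r, 2], [0, 1])
     else if q = 11 then (if r = 0 then (1, [r, 0], [0, 0]) else (11, [r, r], [1, 1]))
     else (1, [r, 0], [0, 0]))"

definition prepend_tm :: tm where
  "prepend_tm =
     \<lparr>ntapes = 2, alpha = 3, nstates = 12, delta = (\<lambda>q rs. prepend_delta q (rs ! 0))\<rparr>"

lemma wf_prepend_tm: "wf_tm prepend_tm"
  unfolding wf_tm_def prepend_tm_def prepend_delta_def by auto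

lemma tm_run_Suc: "tm_run M (Suc k) c = tm_run M k (tm_step M c)"
  by (metis comp_apply funpow_Suc_right tm_run_def)

lemma word_tape_snoc:
  "(word_tape ys)(int (length ys) := bool_sym b) = word_tape (ys @ [b])"
  by (auto simp: word_tape_def fun_eq_iff nth_append)

lemma word_tape_at_length: "word_tape (pre @ todo) (int (length pre)) = read_sym todo"
  by (simp add: word_tape_def read_sym_def split: list.split)

lemma word_tape_rewrite_at_length:
  "(word_tape (pre @ todo))(int (length pre) := read_sym todo) = word_tape (pre @ todo)"
  by (metis fun_upd_triv word_tape_at_length)

lemma word_tape_end: "word_tape ys (int (length ys)) = 0"
  by (simp add: word_tape_def)

lemma upt_two: "[0..<2] = [0::nat, 1]"
  by (simp add: upt_rec)

lemma tm_step_cfg_stay: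
  assumes "ys' = ys @ [b]" "q \<noteq> 1"
    and "prepend_delta q (read_sym todo) = (q', [read_sym todo, bool_sym b], [0, 1])"
  shows "tm_step prepend_tm (cfg q pre todo ys) = cfg q' pre todo ys'"
  using assms
  by (auto simp: tm_step_def cfg_def prepend_tm_def upt_two word_tape_at_length word_tape_end
      word_tape_rewrite_at_length word_tape_snoc[symmetric] fun_eq_iff)

lemma tm_step_cfg_move:
  assumes "pre' = pre @ [c]" "ys' = ys @ [b]" "q \<noteq> 1"
    and "prepend_delta q (bool_sym c) = (q', [bool_sym c, bool_sym b], [1, 1])"
  shows "tm_step prepend_tm (cfg q pre (c # todo) ys) = cfg q' pre' todo ys'"
proof -
  have "read_sym (c # todo) = bool_sym c" by (simp add: read_sym_def)
  with assms word_tape_rewrite_at_length[of pre "c # todo"] show ?thesis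
    by (auto simp: tm_step_def cfg_def prepend_tm_def upt_two word_tape_at_length word_tape_end
        word_tape_snoc[symmetric] fun_eq_iff)
qed

lemma tm_step_cfg_halt: "tm_step prepend_tm (cfg 11 pre [] ys) = cfg 1 pre [] ys"
  using word_tape_at_length[of pre "[]"]
  by (auto simp: tm_step_def cfg_def prepend_tm_def upt_two word_tape_end read_sym_def
      prepend_delta_def fun_eq_iff)

lemma tm_run_copy_rest:
  "tm_run prepend_tm (Suc (length rest)) (cfg 11 pre rest ys) = cfg 1 (pre @ rest) [] (ys @ rest)"
proof (induction rest arbitrary: pre ys)
  case Nil
  show ?case by (simp add: tm_run_def tm_step_cfg_halt)
next
  case (Cons c rest)
  have "tm_step prepend_tm (cfg 11 pre (c # rest) ys) = cfg 11 (pre @ [c]) rest (ys @ [c])"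
    by (rule tm_step_cfg_move) (auto simp: bool_sym_def prepend_delta_def)
  with Cons.IH show ?case by (simp add: tm_run_Suc)
qed

lemma tm_run_increment:
  "\<exists>k \<le> length (tagged bs @ [False, False] @ rest) + 3.
     tm_run prepend_tm k (cfg 8 pre (tagged bs @ [False, False] @ rest) ys)
     = cfg 1 (pre @ tagged bs @ [False, False] @ rest) []
         (ys @ tagged (bits_incr bs) @ [False, False] @ rest)"
proof (induction bs arbitrary: pre ys)
  case Nil
  let ?todo = "False # False # rest"
  have "tm_step prepend_tm (cfg 8 pre ?todo ys) = cfg 10 pre ?todo (ys @ [True])"
    by (rule tm_step_cfg_stay) (simp_all add: read_sym_def bool_sym_def prepend_delta_def)
  moreover have "tm_step prepend_tm (cfg 10 pre ?todo (ys @ [True]))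
      = cfg 11 pre ?todo (ys @ [True, True])"
    by (rule tm_step_cfg_stay) (simp_all add: read_sym_def bool_sym_def prepend_delta_def)
  ultimately have "tm_run prepend_tm (Suc (Suc (Suc (length ?todo)))) (cfg 8 pre ?todo ys)
      = cfg 1 (pre @ ?todo) [] (ys @ [True, True] @ ?todo)"
    using tm_run_copy_rest[of ?todo pre "ys @ [True, True]"] by (simp add: tm_run_Suc)
  then show ?case
    by (intro exI[of _ "Suc (Suc (Suc (length ?todo)))"]) simp
next
  case (Cons b bs)
  let ?todo = "tagged bs @ [False, False] @ rest"
  have first: "tm_step prepend_tm (cfg 8 pre (True # b # ?todo) ys)
      = cfg 9 (pre @ [True]) (b # ?todo) (ys @ [True])"
    by (rule tm_step_cfg_move) (simp_all add: bool_sym_def prepend_delta_def)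
  show ?case
  proof (cases b)
    case True
    \<comment> \<open>the bit 1 becomes 0 and the carry moves on\<close>
    have "tm_step prepend_tm (cfg 9 (pre @ [True]) (b # ?todo) (ys @ [True]))
        = cfg 8 (pre @ [True, b]) ?todo (ys @ [True, False])"
      by (rule tm_step_cfg_move[where b = False]) (simp_all add: True bool_sym_def prepend_delta_def)
    moreover obtain k where "k \<le> length ?todo + 3"
      and "tm_run prepend_tm k (cfg 8 (pre @ [True, b]) ?todo (ys @ [True, False]))
         = cfg 1 (pre @ [True, b] @ ?todo) []
             ((ys @ [True, False]) @ tagged (bits_incr bs) @ [False, False] @ rest)"
      using Cons.IH[of "pre @ [True, b]" "ys @ [True, False]"] by auto
    ultimately show ?thesis
      using first True by (intro exI[of _ "Suc (Suc k)"]) (simp add: tm_run_Suc)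
  next
    case False
    have "tm_step prepend_tm (cfg 9 (pre @ [True]) (b # ?todo) (ys @ [True]))
        = cfg 11 (pre @ [True, b]) ?todo (ys @ [True, True])"
      by (rule tm_step_cfg_move) (simp_all add: False bool_sym_def prepend_delta_def)
    then show ?thesis
      using first False tm_run_copy_rest[of ?todo "pre @ [True, b]" "ys @ [True, True]"]
      by (intro exI[of _ "Suc (Suc (Suc (length ?todo)))"]) (simp add: tm_run_Suc)
  qed
qed

lemma tm_run_copy_board:
  "\<exists>k \<le> length (tagged bd @ [False, False] @ tagged bs @ [False, False] @ rest) + 5.
     tm_run prepend_tm k (cfg 3 pre (tagged bd @ [False, False] @ tagged bs @ [False, False] @ rest) ys)
     = cfg 1 (pre @ tagged bd @ [False, False] @ tagged bs @ [False, False] @ rest) []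
         (ys @ tagged bd @ [False, False, False, False] @ tagged (bits_incr bs) @ [False, False] @ rest)"
proof (induction bd arbitrary: pre ys)
  case Nil
  let ?todo = "tagged bs @ [False, False] @ rest"
  have "tm_step prepend_tm (cfg 3 pre (False # False # ?todo) ys)
      = cfg 5 (pre @ [False]) (False # ?todo) (ys @ [False])"
    by (rule tm_step_cfg_move[where b = False]) (simp_all add: bool_sym_def prepend_delta_def)
  moreover have "tm_step prepend_tm (cfg 5 (pre @ [False]) (False # ?todo) (ys @ [False]))
      = cfg 6 (pre @ [False, False]) ?todo (ys @ [False, False])"
    by (rule tm_step_cfg_move[where b = False]) (simp_all add: bool_sym_def prepend_delta_def)
  moreover have "tm_step prepend_tm (cfg 6 (pre @ [False, False]) ?todo (ys @ [False, False]))
      = cfg 7 (pre @ [False, False]) ?todo (ys @ [False, False, False])"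
    by (rule tm_step_cfg_stay[where b = False]) (simp_all add: bool_sym_def prepend_delta_def)
  moreover have "tm_step prepend_tm (cfg 7 (pre @ [False, False]) ?todo (ys @ [False, False, False]))
      = cfg 8 (pre @ [False, False]) ?todo (ys @ [False, False, False, False])"
    by (rule tm_step_cfg_stay[where b = False]) (simp_all add: bool_sym_def prepend_delta_def)
  moreover obtain k where "k \<le> length ?todo + 3"
    and "tm_run prepend_tm k (cfg 8 (pre @ [False, False]) ?todo (ys @ [False, False, False, False]))
       = cfg 1 ((pre @ [False, False]) @ ?todo) []
           ((ys @ [False, False, False, False]) @ tagged (bits_incr bs) @ [False, False] @ rest)"
    using tm_run_increment by blast
  ultimately show ?case
    by (intro exI[of _ "Suc (Suc (Suc (Suc k)))"]) (simp add: tm_run_Suc)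
next
  case (Cons b bd)
  let ?todo = "tagged bd @ [False, False] @ tagged bs @ [False, False] @ rest"
  have "tm_step prepend_tm (cfg 3 pre (True # b # ?todo) ys)
      = cfg 4 (pre @ [True]) (b # ?todo) (ys @ [True])"
    by (rule tm_step_cfg_move) (simp_all add: bool_sym_def prepend_delta_def)
  moreover have "tm_step prepend_tm (cfg 4 (pre @ [True]) (b # ?todo) (ys @ [True]))
      = cfg 3 (pre @ [True, b]) ?todo (ys @ [True, b])"
    by (rule tm_step_cfg_move) (simp_all add: bool_sym_def prepend_delta_def)
  moreover obtain k where "k \<le> length ?todo + 5"
    and "tm_run prepend_tm k (cfg 3 (pre @ [True, b]) ?todo (ys @ [True, b]))
       = cfg 1 ((pre @ [True, b]) @ ?todo) []
           ((ys @ [True, b]) @ tagged bd @ [False, False, False, False] @ tagged (bits_incr bs)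
              @ [False, False] @ rest)"
    using Cons.IH by blast
  ultimately show ?case
    by (intro exI[of _ "Suc (Suc k)"]) (simp add: tm_run_Suc)
qed

lemma tm_init_eq_cfg: "tm_init x = cfg 0 [] x []"
  by (auto simp: tm_init_def cfg_def word_tape_def bool_sym_def fun_eq_iff)

lemma fst_cfg: "fst (cfg q pre todo ys) = q"
  by (simp add: cfg_def)

lemma tm_output_cfg: "tm_output prepend_tm (cfg q pre todo ys) = ys"
proof -
  have "(LEAST j. word_tape ys (int j) \<notin> {1, 2}) = length ys"
    by (rule Least_equality) (auto simp: word_tape_def bool_sym_def split: if_splits)
  then show ?thesis
    by (auto simp: tm_output_def cfg_def prepend_tm_def word_tape_def bool_sym_def
        intro!: nth_equalityI)
qed

lemma tm_computes_within_mono: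
  "tm_computes_within M x y n \<Longrightarrow> n \<le> n' \<Longrightarrow> tm_computes_within M x y n'"
  unfolding tm_computes_within_def by (blast intro: le_trans)

lemma prepend_tm_computes:
  "tm_computes_within prepend_tm (enc_item bd @ enc_item bs @ rest)
     (enc_item (False # bd) @ enc_item [] @ enc_item (bits_incr bs) @ rest)
     (length (enc_item bd @ enc_item bs @ rest) + 7)"
proof -
  let ?x = "tagged bd @ [False, False] @ tagged bs @ [False, False] @ rest"
  have "tm_step prepend_tm (cfg 0 [] ?x []) = cfg 2 [] ?x [True]"
    by (rule tm_step_cfg_stay[where b = True]) (simp_all add: bool_sym_def prepend_delta_def)
  moreover have "tm_step prepend_tm (cfg 2 [] ?x [True]) = cfg 3 [] ?x [True, False]"
    by (rule tm_step_cfg_stay[where b = False]) (simp_all add: bool_sym_def prepend_delta_def)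
  moreover obtain k where "k \<le> length ?x + 5"
    and "tm_run prepend_tm k (cfg 3 [] ?x [True, False])
       = cfg 1 ?x [] ([True, False] @ tagged bd @ [False, False, False, False] @ tagged (bits_incr bs)
           @ [False, False] @ rest)"
    using tm_run_copy_board[of bd bs rest "[]" "[True, False]"] by auto
  ultimately have "tm_run prepend_tm (Suc (Suc k)) (tm_init ?x)
      = cfg 1 ?x [] ([True, False] @ tagged bd @ [False, False, False, False] @ tagged (bits_incr bs)
           @ [False, False] @ rest)"
    by (simp add: tm_init_eq_cfg tm_run_Suc)
  with \<open>k \<le> length ?x + 5\<close> show ?thesis
    unfolding tm_computes_within_def enc_item_eq_tagged
    by (intro exI[of _ "Suc (Suc k)"]) (simp add: tm_output_cfg fst_cfg)
qed

lemma enc_cfp_prepend_start_cell: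
  "enc_cfp (prepend_start_cell I) = enc_item (False # board I) @ enc_item []
     @ enc_item (bits_incr (bits_of (start I))) @ concat (map (\<lambda>j. enc_item (bits_of j)) (jumps I))"
proof -
  have "bits_of 0 = []" by simp
  then show ?thesis by (simp add: enc_cfp_def bits_of_Suc del: bits_of.simps)
qed

theorem mainTheorem3:
  shows "\<exists>g :: cfp \<Rightarrow> cfp. \<exists>M c d.
     wf_tm M \<and>
     (\<forall>I. valid_cfp I \<longrightarrow>
        tm_computes_within M (enc_cfp I) (enc_cfp (g I)) (c * (length (enc_cfp I) + 1) ^ d)
        \<and> valid_cfp (g I) \<and> start (g I) = 0
        \<and> (cfp_solvable (g I) \<longleftrightarrow> cfp_solvable I))"
proof (intro exI conjI allI impI)
  show "wf_tm prepend_tm" by (rule wf_prepend_tm)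
next
  fix I assume valid: "valid_cfp I"
  have "tm_computes_within prepend_tm (enc_cfp I) (enc_cfp (prepend_start_cell I))
      (length (enc_cfp I) + 7)"
    unfolding enc_cfp_prepend_start_cell unfolding enc_cfp_def by (rule prepend_tm_computes)
  then show "tm_computes_within prepend_tm (enc_cfp I) (enc_cfp (prepend_start_cell I))
      (8 * (length (enc_cfp I) + 1) ^ 1)"
    by (rule tm_computes_within_mono) simp
  show "valid_cfp (prepend_start_cell I)" using valid by (rule valid_cfp_prepend_start_cell)
  show "start (prepend_start_cell I) = 0" by simp
  show "cfp_solvable (prepend_start_cell I) \<longleftrightarrow> cfp_solvable I"
    by (rule cfp_solvable_prepend_start_cell)
qed

end
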